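(* Let $A$ be a commutative $\mathbb Q$-algebra, $a\in A$ a non-zero-divisor, $B=A[z]$ and $\mathcal D=\partial_z-a:B\to B$, $h\mapsto h'-ah$. Let $f=c_0+c_1z+\cdots+c_dz^d\in B$ be such that $v_a(c_i)\ge i$ for $0\le i\le d$, and such that for some $t\le d$ we have $v_a(c_t)\ge t+1$. Put $\tilde f=f-c_tz^t$. If $f^m\in\mathrm{Im}\,\mathcal D$ for some $m\ge1$, then $\tilde f^m\in\mathrm{Im}\,\mathcal D$.
   Context: For $c\in A$, the $a$-order $v_a(c)\in\mathbb Z_{\ge0}\cup\{\infty\}$ is the supremum of the integers $m\ge0$ with $c\in Aa^m$ (so $v_a(c)=\infty$ if $c\in\bigcap_{m\ge1}Aa^m$). *)

theory Defs
  imports "HOL-Computational_Algebra.Polynomial" "HOL-Library.Extended_Nat"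
begin

definition a_order :: "'a::comm_ring_1 \<Rightarrow> 'a \<Rightarrow> enat" where
  "a_order a c = Sup {enat m | m. a ^ m dvd c}"

text \<open>Formal derivative d/dz on A[z] for an arbitrary commutative ring
  (the library's pderiv requires no zero divisors).\<close>
definition poly_deriv :: "'a::comm_ring_1 poly \<Rightarrow> 'a poly" where
  "poly_deriv h = (\<Sum>i\<in>{1..degree h}. monom (of_nat i * coeff h i) (i - 1))"

definition Dop :: "'a::comm_ring_1 \<Rightarrow> 'a poly \<Rightarrow> 'a poly" where
  "Dop a h = poly_deriv h - smult a h"

text \<open>A commutative ring is a Q-algebra iff every positive integer is invertible in it.\<close>
definition is_Q_algebra :: "'a::comm_ring_1 itself \<Rightarrow> bool" where
  "is_Q_algebra _ \<longleftrightarrow> (\<forall>n::nat. n > 0 \<longrightarrow> (of_nat n :: 'a) dvd 1)"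

end

theory Submission
  imports Defs
begin

(* Call p "a-graded" if a^i divides its i-th coefficient for every i, and
   "strictly a-graded" if even a^(i+1) divides it.  Two facts carry the argument:
   (1) every strictly a-graded polynomial lies in the image of D = d/dz - a, because
       a^(j+1) e z^j = a^j (j e) z^(j-1) - D(a^j e z^j) lets one descend on j, and the image
       of the additive map D is closed under finite sums;
   (2) a-graded polynomials are closed under products and sums.
   For the theorem write g = f - c z^t with c = coeff f t.  Both f and g are a-graded, so
   f^m - g^m = c z^t * (sum of g^(m-1-i) f^i) is c z^t times an a-graded polynomial; since
   a^(t+1) divides c this product is strictly a-graded, hence in Im D by (1), and
   g^m = f^m - (f^m - g^m) lies in Im D as well. *)

lemma coeff_poly_deriv: "coeff (poly_deriv h) i = of_nat (i + 1) * coeff h (i + 1)"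
proof -
  have "coeff (poly_deriv h) i =
        (\<Sum>k\<in>{1..degree h}. if k = i + 1 then of_nat (i + 1) * coeff h (i + 1) else 0)"
    unfolding poly_deriv_def coeff_sum coeff_monom by (rule sum.cong) auto
  also have "\<dots> = of_nat (i + 1) * coeff h (i + 1)"
    by (cases "i + 1 \<le> degree h") (simp_all add: coeff_eq_0)
  finally show ?thesis .
qed

lemma Dop_diff: "Dop a (x - y) = Dop a x - Dop a y"
  by (rule poly_eqI) (simp add: Dop_def coeff_poly_deriv algebra_simps)

lemma Dop_0: "Dop a 0 = 0"
  using Dop_diff[of a 0 0] by simp

lemma range_Dop_diff:
  assumes "x \<in> range (Dop a)" "y \<in> range (Dop a)"
  shows "x - y \<in> range (Dop a)"
proof -
  obtain u v where "x = Dop a u" "y = Dop a v" using assms by blast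
  then have "x - y = Dop a (u - v)" by (simp add: Dop_diff)
  then show ?thesis by blast
qed

lemma range_Dop_add:
  assumes "x \<in> range (Dop a)" "y \<in> range (Dop a)"
  shows "x + y \<in> range (Dop a)"
proof -
  have "0 - y \<in> range (Dop a)"
    using range_Dop_diff[OF _ assms(2)] Dop_0 by (metis rangeI)
  from range_Dop_diff[OF assms(1) this] show ?thesis by simp
qed

lemma range_Dop_sum:
  "finite S \<Longrightarrow> (\<And>i. i \<in> S \<Longrightarrow> g i \<in> range (Dop a)) \<Longrightarrow> sum g S \<in> range (Dop a)"
proof (induction S rule: finite_induct)
  case empty
  show ?case using rangeI[of "Dop a" 0] by (simp add: Dop_0)
qed (simp add: range_Dop_add)

text \<open>The monomial a^(j+1) e z^j lies in Im D, by induction on j using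
  D(b z^(j+1)) = (j+1) b z^j - a b z^(j+1).\<close>

lemma Dop_monom_Suc:
  "Dop a (monom b (Suc j)) = monom (of_nat (Suc j) * b) j - monom (a * b) (Suc j)"
  by (rule poly_eqI) (auto simp add: Dop_def coeff_poly_deriv coeff_monom)

lemma monom_in_range_Dop: "monom (a ^ (j + 1) * e) j \<in> range (Dop a)"
proof (induction j arbitrary: e)
  case 0
  have "Dop a (monom (- e) 0) = monom (a * e) 0"
    by (rule poly_eqI) (auto simp add: Dop_def coeff_poly_deriv coeff_monom)
  then show ?case by (metis power_one_right rangeI Suc_eq_plus1 One_nat_def)
next
  case (Suc j)
  have "monom (a ^ (Suc j + 1) * e) (Suc j) =
        monom (a ^ (j + 1) * (of_nat (Suc j) * e)) j - Dop a (monom (a ^ (j + 1) * e) (Suc j))"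
    by (rule poly_eqI) (auto simp add: Dop_monom_Suc coeff_monom algebra_simps)
  then show ?case using range_Dop_diff[OF Suc.IH rangeI] by simp
qed

definition a_graded :: "'a::comm_ring_1 \<Rightarrow> 'a poly \<Rightarrow> bool" where
  "a_graded a p \<longleftrightarrow> (\<forall>i. a ^ i dvd coeff p i)"

definition strictly_a_graded :: "'a::comm_ring_1 \<Rightarrow> 'a poly \<Rightarrow> bool" where
  "strictly_a_graded a p \<longleftrightarrow> (\<forall>i. a ^ (i + 1) dvd coeff p i)"

lemma strictly_a_graded_in_range_Dop:
  assumes "strictly_a_graded a p"
  shows "p \<in> range (Dop a)"
proof -
  have "monom (coeff p i) i \<in> range (Dop a)" for i
  proof -
    obtain e where "coeff p i = a ^ (i + 1) * e"
      using assms unfolding strictly_a_graded_def by (meson dvdE)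
    then show ?thesis by (simp only: monom_in_range_Dop)
  qed
  then have "(\<Sum>i\<le>degree p. monom (coeff p i) i) \<in> range (Dop a)"
    by (intro range_Dop_sum) simp_all
  then show ?thesis by (simp add: poly_as_sum_of_monoms)
qed

lemma a_graded_mult:
  assumes "a_graded a p" "a_graded a q"
  shows "a_graded a (p * q)"
  unfolding a_graded_def coeff_mult
proof (intro allI dvd_sum)
  fix n i :: nat
  assume "i \<in> {..n}"
  then have "a ^ n = a ^ i * a ^ (n - i)" by (simp flip: power_add)
  also have "\<dots> dvd coeff p i * coeff q (n - i)"
    using assms unfolding a_graded_def by (simp add: mult_dvd_mono)
  finally show "a ^ n dvd coeff p i * coeff q (n - i)" .
qed

lemma a_graded_power: "a_graded a p \<Longrightarrow> a_graded a (p ^ n)"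
  by (induction n) (simp_all add: a_graded_mult, simp add: a_graded_def coeff_1)

lemma a_graded_sum: "(\<And>i. i \<in> S \<Longrightarrow> a_graded a (g i)) \<Longrightarrow> a_graded a (sum g S)"
  unfolding a_graded_def coeff_sum by (simp add: dvd_sum)

lemma strictly_a_graded_monom_mult:
  assumes c: "a ^ (t + 1) dvd c" and p: "a_graded a p"
  shows "strictly_a_graded a (monom c t * p)"
  unfolding strictly_a_graded_def
proof
  fix j
  show "a ^ (j + 1) dvd coeff (monom c t * p) j"
  proof (cases "j < t")
    case False
    then have "a ^ (j + 1) = a ^ (t + 1) * a ^ (j - t)" by (simp only: power_add [symmetric]) simp
    also have "\<dots> dvd c * coeff p (j - t)"
      using c p unfolding a_graded_def by (simp add: mult_dvd_mono)
    finally show ?thesis using False by (simp add: coeff_monom_mult)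
  qed (simp add: coeff_monom_mult)
qed

lemma dvd_of_a_order_ge:
  fixes a c :: "'a::comm_ring_1"
  assumes "a_order a c \<ge> enat i"
  shows "a ^ i dvd c"
proof (rule ccontr)
  assume nd: "\<not> a ^ i dvd c"
  have "a_order a c \<le> enat (i - 1)"
    unfolding a_order_def
  proof (rule Sup_least)
    fix x assume "x \<in> {enat m |m. a ^ m dvd c}"
    then obtain m where x: "x = enat m" and m: "a ^ m dvd c" by blast
    have "m < i"
      using nd m le_imp_power_dvd[of i m a] dvd_trans by (metis not_less)
    then show "x \<le> enat (i - 1)" using x by simp
  qed
  with assms have "enat i \<le> enat (i - 1)" by (rule order_trans)
  moreover have "i > 0" using nd by (cases i) auto
  ultimately show False by simp
qed

theorem lemma2p13:
  fixes a :: "'a::comm_ring_1" and f :: "'a poly" and d t m :: nat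
  assumes QA: "is_Q_algebra TYPE('a)"
    and nzd: "\<forall>x::'a. a * x = 0 \<longrightarrow> x = 0"
    and deg: "degree f \<le> d"
    and ord: "\<forall>i\<le>d. a_order a (coeff f i) \<ge> enat i"
    and t: "t \<le> d" "a_order a (coeff f t) \<ge> enat (t + 1)"
    and m: "m \<ge> 1"
    and img: "f ^ m \<in> range (Dop a)"
  shows "(f - monom (coeff f t) t) ^ m \<in> range (Dop a)"
proof -
  define c where "c = coeff f t"
  define g where "g = f - monom c t"
  have ct: "a ^ (t + 1) dvd c"
    unfolding c_def using t(2) by (rule dvd_of_a_order_ge)
  have f_graded: "a_graded a f"
    unfolding a_graded_def using ord deg dvd_of_a_order_ge
    by (metis coeff_eq_0 dvd_0_right le_less_trans not_le)
  have g_graded: "a_graded a g"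
    using f_graded unfolding a_graded_def g_def c_def by (auto simp: coeff_monom)
  define S where "S = (\<Sum>i<m. g ^ (m - Suc i) * f ^ i)"
  have "f ^ m - g ^ m = monom c t * S"
    unfolding S_def by (subst power_diff_sumr2) (simp add: g_def)
  also have "\<dots> \<in> range (Dop a)"
    unfolding S_def
    by (intro strictly_a_graded_in_range_Dop strictly_a_graded_monom_mult ct a_graded_sum
        a_graded_mult a_graded_power f_graded g_graded)
  finally have "f ^ m - (f ^ m - g ^ m) \<in> range (Dop a)"
    using img range_Dop_diff by blast
  then show ?thesis by (simp add: g_def c_def)
qed

end
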